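(* Let $M$ be a matroid on ground set $E=\{1,\dots,n\}$, let $x^*\in P_B(M)$, and let $F\subseteq P_B(M)$ be the unique face of $P_B(M)$ of minimal affine dimension containing $x^*$, with $\dim(F)=d$. Then there exists a basis $B$ of $M$ with $\chi(B)\in F$ and \[ \|\chi(B)-x^*\|_1\le d. \]
   Context: $\chi(S)\in\{0,1\}^n$ denotes the characteristic vector of $S\subseteq E$. $P_B(M)$ is the base polytope, the convex hull of the characteristic vectors of all bases of $M$. *)

theory Defs
  imports "HOL-Analysis.Analysis"
begin

text \<open>A matroid on the finite ground set UNIV :: 'n set (playing the role of E = {1..n}),
  given by its family of bases (basis axioms: nonempty family, basis exchange).\<close>
definition matroid_bases :: "'n::finite set set \<Rightarrow> bool" where
  "matroid_bases \<B> \<longleftrightarrow> \<B> \<noteq> {} \<and>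
     (\<forall>B1\<in>\<B>. \<forall>B2\<in>\<B>. \<forall>x\<in>B1 - B2. \<exists>y\<in>B2 - B1. insert y (B1 - {x}) \<in> \<B>)"

definition chi :: "'n::finite set \<Rightarrow> real ^ 'n" where
  "chi S = (\<chi> i. if i \<in> S then 1 else 0)"

definition base_polytope :: "'n::finite set set \<Rightarrow> (real ^ 'n) set" where
  "base_polytope \<B> = convex hull (chi ` \<B>)"

definition l1_norm :: "real ^ 'n::finite \<Rightarrow> real" where
  "l1_norm v = (\<Sum>i\<in>UNIV. \<bar>v $ i\<bar>)"

end

theory Submission
  imports Defs
begin

text \<open>
  Write x as a convex combination \<open>\<Sum> \<mu>\<^sub>B \<chi>(B)\<close> of characteristic vectors of bases.
  A linear functional exposing F makes every basis in the support of \<mu> a maximum-weight basis.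
  Averaging gives \<open>\<Sum> \<mu>\<^sub>B \<parallel>\<chi>(B) - x\<parallel>\<^sub>1 = \<Sum>\<^sub>i 2 x\<^sub>i (1 - x\<^sub>i) \<le> |T| / 2\<close>,
  where T is the set of fractional coordinates of x, so it suffices to show \<open>|T| \<le> 2 d\<close>.
  For \<open>i \<in> T\<close> some support basis contains i and another avoids it; an exchange argument
  between maximum-weight bases then yields maximum-weight bases A and \<open>A - i + y\<close>, and
  \<open>\<chi>(A) - \<chi>(A - i + y)\<close> is a direction of F supported on \<open>{i, y}\<close>.
  Vectors with at most two nonzero coordinates spanning a space of dimension at most d
  have at most 2 d coordinates in their joint support.
\<close>

lemma chi_nth [simp]: "chi S $ i = (if i \<in> S then 1 else 0)"
  by (simp add: chi_def)

lemma inner_chi: "a \<bullet> chi S = sum (($) a) S"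
  by (simp add: inner_vec_def if_distrib sum.If_cases)

lemma inj_chi: "inj chi"
  by (rule injI) (metis chi_nth one_neq_zero subsetI subset_antisym)

lemma base_polytope_convex_combination:
  fixes \<B> :: "'n::finite set set"
  assumes "x \<in> base_polytope \<B>"
  obtains \<mu> where "\<forall>B\<in>\<B>. 0 \<le> \<mu> B" "sum \<mu> \<B> = 1" "x = (\<Sum>B\<in>\<B>. \<mu> B *\<^sub>R chi B)"
proof -
  obtain u where u: "\<forall>v\<in>chi ` \<B>. 0 \<le> u v" "sum u (chi ` \<B>) = 1"
    "(\<Sum>v\<in>chi ` \<B>. u v *\<^sub>R v) = x"
    using assms unfolding base_polytope_def by (auto simp: convex_hull_finite)
  show thesis
  proof (rule that[of "u \<circ> chi"])
    show "sum (u \<circ> chi) \<B> = 1" "x = (\<Sum>B\<in>\<B>. (u \<circ> chi) B *\<^sub>R chi B)"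
      using u(2,3) by (simp_all add: sum.reindex[OF inj_on_subset[OF inj_chi subset_UNIV]])
  qed (use u(1) in auto)
qed

lemma convex_combination_chi_nth:
  fixes \<B> :: "'n::finite set set"
  assumes "sum \<mu> \<B> = 1" "x = (\<Sum>B\<in>\<B>. \<mu> B *\<^sub>R chi B)"
  shows "x $ i = sum \<mu> {B\<in>\<B>. i \<in> B}" "1 - x $ i = sum \<mu> {B\<in>\<B>. i \<notin> B}"
proof -
  show x_i: "x $ i = sum \<mu> {B\<in>\<B>. i \<in> B}"
    using assms(2) by (auto simp: sum.inter_filter intro!: sum.cong)
  have "sum \<mu> \<B> = sum \<mu> {B\<in>\<B>. i \<in> B} + sum \<mu> {B\<in>\<B>. i \<notin> B}"
    using sum.Int_Diff[of \<B> \<mu> "{B. i \<in> B}"] by (simp add: Int_def set_diff_eq)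
  then show "1 - x $ i = sum \<mu> {B\<in>\<B>. i \<notin> B}" using assms(1) x_i by simp
qed

lemma face_of_convex_hull_support:
  fixes p :: "'i \<Rightarrow> 'a::euclidean_space"
  assumes "finite I" and F: "F face_of convex hull (p ` I)"
    and \<mu>: "\<forall>i\<in>I. 0 \<le> \<mu> i" "sum \<mu> I = 1" "(\<Sum>i\<in>I. \<mu> i *\<^sub>R p i) \<in> F"
    and "i \<in> I" "\<mu> i \<noteq> 0"
  shows "p i \<in> F"
proof -
  have "polyhedron (convex hull (p ` I))" using \<open>finite I\<close> by (simp add: polyhedron_convex_hull)
  with F have "F exposed_face_of convex hull (p ` I)"
    by (simp add: exposed_face_of_polyhedron)
  then obtain a b where below: "convex hull (p ` I) \<subseteq> {z. a \<bullet> z \<le> b}"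
    and F_eq: "F = convex hull (p ` I) \<inter> {z. a \<bullet> z = b}"
    unfolding exposed_face_of_def by blast
  have below_p: "a \<bullet> p j \<le> b" if "j \<in> I" for j
    using below hull_inc[of "p j" "p ` I"] that by blast
  have "(\<Sum>j\<in>I. \<mu> j * (b - a \<bullet> p j)) = b * sum \<mu> I - a \<bullet> (\<Sum>j\<in>I. \<mu> j *\<^sub>R p j)"
    by (simp add: algebra_simps sum_subtractf sum_distrib_left inner_sum_right mult.commute)
  also have "\<dots> = 0" using \<mu> F_eq by simp
  finally have "\<forall>j\<in>I. \<mu> j * (b - a \<bullet> p j) = 0"
    using sum_nonneg_eq_0_iff[OF \<open>finite I\<close>, of "\<lambda>j. \<mu> j * (b - a \<bullet> p j)"] \<mu>(1) below_p
    by simp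
  then have "a \<bullet> p i = b" using \<open>i \<in> I\<close> \<open>\<mu> i \<noteq> 0\<close> by force
  then show ?thesis using F_eq hull_inc[of "p i" "p ` I"] \<open>i \<in> I\<close> by blast
qed

lemma face_of_base_polytope_max_weight:
  fixes \<B> :: "'n::finite set set"
  assumes "F face_of base_polytope \<B>"
  obtains w :: "'n \<Rightarrow> real" and b where "\<forall>B\<in>\<B>. sum w B \<le> b"
    "\<And>B. B \<in> \<B> \<Longrightarrow> chi B \<in> F \<longleftrightarrow> sum w B = b"
proof -
  have "polyhedron (base_polytope \<B>)"
    unfolding base_polytope_def by (simp add: polyhedron_convex_hull)
  with assms have "F exposed_face_of base_polytope \<B>"
    by (simp add: exposed_face_of_polyhedron)
  then obtain a b where below: "base_polytope \<B> \<subseteq> {z. a \<bullet> z \<le> b}"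
    and F_eq: "F = base_polytope \<B> \<inter> {z. a \<bullet> z = b}"
    unfolding exposed_face_of_def by blast
  have in_P: "chi B \<in> base_polytope \<B>" if "B \<in> \<B>" for B
    unfolding base_polytope_def using that by (simp add: hull_inc)
  show thesis
  proof (rule that[of "($) a" b])
    show "\<forall>B\<in>\<B>. sum (($) a) B \<le> b"
      using below in_P by (force simp flip: inner_chi)
    show "chi B \<in> F \<longleftrightarrow> sum (($) a) B = b" if "B \<in> \<B>" for B
      using F_eq in_P[OF that] by (simp flip: inner_chi)
  qed
qed

lemma sum_exchange:
  fixes w :: "'a \<Rightarrow> 'b::ab_group_add"
  assumes "finite B" "f \<in> B" "g \<notin> B"
  shows "sum w (insert g (B - {f})) = sum w B - w f + w g"
  using assms by (simp add: sum.remove[of B f w])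

lemma exchange_preserves_max_weight:
  fixes w :: "'a \<Rightarrow> real"
  assumes max: "\<forall>B\<in>\<B>. sum w B \<le> m"
    and B: "finite B" "sum w B = m" and fg: "f \<in> B" "g \<notin> B" "w f \<le> w g"
    and "insert g (B - {f}) \<in> \<B>"
  shows "sum w (insert g (B - {f})) = m"
  using max assms sum_exchange[OF B(1) fg(1,2), of w] by fastforce

lemma max_weight_bases_exchange:
  fixes w :: "'n::finite \<Rightarrow> real"
  assumes mb: "matroid_bases \<B>" and max: "\<forall>B\<in>\<B>. sum w B \<le> m"
    and "B1 \<in> \<B>" "sum w B1 = m" "B2 \<in> \<B>" "sum w B2 = m" "e \<in> B1 - B2"
  obtains A y where "A \<in> \<B>" "sum w A = m" "e \<in> A" "y \<notin> A"
    "insert y (A - {e}) \<in> \<B>" "sum w (insert y (A - {e})) = m"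
  using assms(3-)
proof (induction "card (B1 - B2)" arbitrary: B1 B2 rule: less_induct)
  \<comment> \<open>Exchanging at an element of minimum weight in the symmetric difference keeps the weight
    maximal; unless this already exchanges e, it makes \<open>B1 - B2\<close> smaller.\<close>
  case less
  have exch: "\<exists>y\<in>B2 - B1. insert y (B1 - {x}) \<in> \<B>"
    if "B1 \<in> \<B>" "B2 \<in> \<B>" "x \<in> B1 - B2" for B1 B2 x
    using mb that unfolding matroid_bases_def by blast
  let ?U = "(B1 - B2) \<union> (B2 - B1)"
  obtain z where z: "z \<in> ?U" and zmin: "\<And>u. u \<in> ?U \<Longrightarrow> w z \<le> w u"
    using arg_min_if_finite[of ?U w] \<open>e \<in> B1 - B2\<close> by (metis finite UnCI empty_iff not_le)
  show thesis
  proof (cases "z \<in> B1 - B2")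
    case True
    then obtain g where g: "g \<in> B2 - B1" and B1': "insert g (B1 - {z}) \<in> \<B>"
      using exch less.prems by blast
    have m1: "sum w (insert g (B1 - {z})) = m"
      using exchange_preserves_max_weight[OF max _ _ _ _ _ B1'] less.prems True g zmin by auto
    show thesis
    proof (cases "z = e")
      case True
      then show thesis using less.prems B1' m1 g by blast
    next
      case False
      have "insert g (B1 - {z}) - B2 = (B1 - B2) - {z}" using g by auto
      then have "card (insert g (B1 - {z}) - B2) < card (B1 - B2)"
        using \<open>z \<in> B1 - B2\<close> by (metis card_Diff1_less finite)
      from less.hyps[OF this less.prems(1) B1' m1] show thesis
        using less.prems False by blast
    qed
  next
    case False
    then have "z \<in> B2 - B1" using z by blast
    then obtain f where f: "f \<in> B1 - B2" and B2': "insert f (B2 - {z}) \<in> \<B>"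
      using exch less.prems by blast
    have m2: "sum w (insert f (B2 - {z})) = m"
      using exchange_preserves_max_weight[OF max _ _ _ _ _ B2'] less.prems \<open>z \<in> B2 - B1\<close> f zmin
      by auto
    show thesis
    proof (cases "f = e")
      case True
      have B2_restored: "insert z (insert f (B2 - {z}) - {e}) = B2"
        using True \<open>z \<in> B2 - B1\<close> less.prems by auto
      have "e \<in> insert f (B2 - {z})" "z \<notin> insert f (B2 - {z})"
        using True f \<open>z \<in> B2 - B1\<close> by auto
      from less.prems(1)[OF B2' m2 this] show thesis
        by (simp add: B2_restored less.prems(4,5))
    next
      case False
      have "B1 - insert f (B2 - {z}) = (B1 - B2) - {f}" using \<open>z \<in> B2 - B1\<close> by auto
      then have "card (B1 - insert f (B2 - {z})) < card (B1 - B2)"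
        using f by (metis card_Diff1_less finite)
      from less.hyps[OF this less.prems(1) _ _ B2' m2] show thesis
        using less.prems False by blast
    qed
  qed
qed

lemma card_support_le_dim:
  fixes D :: "(real ^ 'n::finite) set"
  assumes sparse: "\<forall>v\<in>D. card {i. v $ i \<noteq> 0} \<le> k"
  shows "card {i. \<exists>v\<in>D. v $ i \<noteq> 0} \<le> k * dim D"
proof -
  obtain I where I: "I \<subseteq> D" "independent I" "D \<subseteq> span I" "card I = dim D"
    by (rule basis_exists)
  have "{i. \<exists>v\<in>D. v $ i \<noteq> 0} \<subseteq> (\<Union>u\<in>I. {i. u $ i \<noteq> 0})"
  proof (rule subsetI, rule ccontr)
    fix i assume "i \<in> {i. \<exists>v\<in>D. v $ i \<noteq> 0}" "i \<notin> (\<Union>u\<in>I. {i. u $ i \<noteq> 0})"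
    then obtain v where "v \<in> D" "v $ i \<noteq> 0" and "I \<subseteq> {u. u $ i = 0}" by auto
    moreover have "subspace {u :: real ^ 'n. u $ i = 0}" by (auto simp: subspace_def)
    ultimately show False using span_minimal I(3) by blast
  qed
  then have "card {i. \<exists>v\<in>D. v $ i \<noteq> 0} \<le> card (\<Union>u\<in>I. {i. u $ i \<noteq> 0})"
    by (intro card_mono) simp_all
  also have "\<dots> \<le> (\<Sum>u\<in>I. card {i. u $ i \<noteq> 0})"
    using I(2) by (intro card_UN_le) (rule independent_imp_finite)
  also have "\<dots> \<le> k * card I"
    using sparse I(1) sum_bounded_above[of I "\<lambda>u. card {i. u $ i \<noteq> 0}" k] by (auto simp: mult.commute)
  finally show ?thesis using I(4) by simp
qed

lemma chi_exchange_support: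
  "{k. (chi A - chi (insert y (A - {j}))) $ k \<noteq> 0} \<subseteq> {j, y}"
  by auto

lemma card_fractional_coords_le_aff_dim:
  fixes \<B> :: "'n::finite set set"
  assumes mb: "matroid_bases \<B>" and F: "F face_of base_polytope \<B>" "x \<in> F"
    and \<mu>: "\<forall>B\<in>\<B>. 0 \<le> \<mu> B" "sum \<mu> \<B> = 1" "x = (\<Sum>B\<in>\<B>. \<mu> B *\<^sub>R chi B)"
  shows "int (card {i. x $ i \<noteq> 0 \<and> x $ i \<noteq> 1}) \<le> 2 * aff_dim F"
proof -
  obtain w :: "'n \<Rightarrow> real" and b where max: "\<forall>B\<in>\<B>. sum w B \<le> b"
    and F_bases: "\<And>B. B \<in> \<B> \<Longrightarrow> chi B \<in> F \<longleftrightarrow> sum w B = b"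
    using face_of_base_polytope_max_weight[OF F(1)] by blast
  have support: "sum w B = b" if "B \<in> \<B>" "\<mu> B \<noteq> 0" for B
    using face_of_convex_hull_support[of \<B> F chi \<mu>] F \<mu> that F_bases
    unfolding base_polytope_def by auto
  define V where "V = (\<lambda>z. z - x) ` F"
  define D where "D = {p - q | p q. p \<in> F \<and> q \<in> F \<and> card {k. (p - q) $ k \<noteq> 0} \<le> 2}"
  have "D \<subseteq> span V"
  proof
    fix v assume "v \<in> D"
    then obtain p q where "p \<in> F" "q \<in> F" "v = p - q" unfolding D_def by blast
    then have "v = (p - x) - (q - x)" "p - x \<in> V" "q - x \<in> V" unfolding V_def by auto
    then show "v \<in> span V" by (metis span_base span_diff)
  qed
  then have "dim D \<le> dim V" by (metis dim_span dim_subset)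
  moreover have "aff_dim F = int (dim V)"
    unfolding V_def by (rule aff_dim_eq_dim_subtract) (simp add: F(2) hull_inc)
  moreover have "card {i. \<exists>v\<in>D. v $ i \<noteq> 0} \<le> 2 * dim D"
    by (rule card_support_le_dim) (auto simp: D_def)
  moreover have "{i. x $ i \<noteq> 0 \<and> x $ i \<noteq> 1} \<subseteq> {i. \<exists>v\<in>D. v $ i \<noteq> 0}"
  proof safe
    fix i assume "x $ i \<noteq> 0" "x $ i \<noteq> 1"
    then have nonzero: "sum \<mu> {B\<in>\<B>. i \<in> B} \<noteq> 0" "sum \<mu> {B\<in>\<B>. i \<notin> B} \<noteq> 0"
      using convex_combination_chi_nth[OF \<mu>(2,3), of i] by simp_all
    obtain B1 where B1: "B1 \<in> \<B>" "\<mu> B1 \<noteq> 0" "i \<in> B1"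
      using sum.not_neutral_contains_not_neutral[OF nonzero(1)] by blast
    obtain B2 where B2: "B2 \<in> \<B>" "\<mu> B2 \<noteq> 0" "i \<notin> B2"
      using sum.not_neutral_contains_not_neutral[OF nonzero(2)] by blast
    obtain A y where A: "A \<in> \<B>" "sum w A = b" "i \<in> A" "y \<notin> A"
      and A': "insert y (A - {i}) \<in> \<B>" "sum w (insert y (A - {i})) = b"
      using max_weight_bases_exchange[OF mb max B1(1) support[OF B1(1,2)] B2(1) support[OF B2(1,2)]]
        B1(3) B2(3) by blast
    let ?v = "chi A - chi (insert y (A - {i}))"
    have "card {k. ?v $ k \<noteq> 0} \<le> card {i, y}"
      by (intro card_mono chi_exchange_support) simp
    also have "\<dots> \<le> 2" by (simp add: card_insert_if)
    finally have "?v \<in> D" unfolding D_def using A A' F_bases by blast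
    moreover have "?v $ i \<noteq> 0" using A(3,4) by auto
    ultimately show "\<exists>v\<in>D. v $ i \<noteq> 0" by blast
  qed
  then have "card {i. x $ i \<noteq> 0 \<and> x $ i \<noteq> 1} \<le> card {i. \<exists>v\<in>D. v $ i \<noteq> 0}"
    by (intro card_mono) simp_all
  ultimately show ?thesis by linarith
qed

lemma mean_l1_distance_chi:
  fixes \<B> :: "'n::finite set set"
  assumes \<mu>: "\<forall>B\<in>\<B>. 0 \<le> \<mu> B" "sum \<mu> \<B> = 1" "x = (\<Sum>B\<in>\<B>. \<mu> B *\<^sub>R chi B)"
  shows "(\<Sum>B\<in>\<B>. \<mu> B * l1_norm (chi B - x)) = (\<Sum>i\<in>UNIV. 2 * x $ i * (1 - x $ i))"
proof -
  have coord: "(\<Sum>B\<in>\<B>. \<mu> B * \<bar>chi B $ i - x $ i\<bar>) = 2 * x $ i * (1 - x $ i)" for i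
  proof -
    note x_i = convex_combination_chi_nth[OF \<mu>(2,3), of i]
    have "0 \<le> x $ i" using x_i(1) \<mu>(1) by (auto intro!: sum_nonneg)
    moreover have "0 \<le> 1 - x $ i" using x_i(2) \<mu>(1) by (auto intro!: sum_nonneg)
    ultimately have "(\<Sum>B\<in>\<B>. \<mu> B * \<bar>chi B $ i - x $ i\<bar>)
        = (\<Sum>B\<in>\<B>. (if i \<in> B then \<mu> B else 0) * (1 - x $ i) + (if i \<notin> B then \<mu> B else 0) * x $ i)"
      by (intro sum.cong) auto
    also have "\<dots> = sum \<mu> {B\<in>\<B>. i \<in> B} * (1 - x $ i) + sum \<mu> {B\<in>\<B>. i \<notin> B} * x $ i"
      by (simp add: sum.distrib sum.inter_filter sum_distrib_right)
    finally show ?thesis unfolding x_i[symmetric] by simp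
  qed
  have "(\<Sum>B\<in>\<B>. \<mu> B * l1_norm (chi B - x)) = (\<Sum>i\<in>UNIV. \<Sum>B\<in>\<B>. \<mu> B * \<bar>chi B $ i - x $ i\<bar>)"
    unfolding l1_norm_def by (simp only: sum_distrib_left sum.swap[of _ \<B>] vector_minus_component)
  also have "\<dots> = (\<Sum>i\<in>UNIV. 2 * x $ i * (1 - x $ i))" by (simp only: coord)
  finally show ?thesis .
qed

lemma sum_two_mul_one_minus_le:
  fixes x :: "real ^ 'n::finite"
  shows "(\<Sum>i\<in>UNIV. 2 * x $ i * (1 - x $ i)) \<le> real (card {i. x $ i \<noteq> 0 \<and> x $ i \<noteq> 1}) / 2"
proof -
  have "2 * t * (1 - t) \<le> (if t \<noteq> 0 \<and> t \<noteq> 1 then 1 / 2 else 0)" for t :: real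
  proof -
    have "0 \<le> (2 * t - 1)\<^sup>2" by simp
    then show ?thesis by (auto simp: power2_eq_square algebra_simps)
  qed
  then have "(\<Sum>i\<in>UNIV. 2 * x $ i * (1 - x $ i))
      \<le> (\<Sum>i\<in>UNIV. if x $ i \<noteq> 0 \<and> x $ i \<noteq> 1 then 1 / 2 else 0)"
    by (intro sum_mono) blast
  also have "\<dots> = real (card {i. x $ i \<noteq> 0 \<and> x $ i \<noteq> 1}) / 2"
    by (simp add: sum.If_cases Int_def)
  finally show ?thesis .
qed

lemma exists_le_weighted_mean:
  fixes f :: "'a \<Rightarrow> real"
  assumes "finite A" "\<forall>a\<in>A. 0 \<le> \<mu> a" "sum \<mu> A = 1"
  obtains a where "a \<in> A" "\<mu> a \<noteq> 0" "f a \<le> (\<Sum>a\<in>A. \<mu> a * f a)"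
proof -
  let ?m = "\<Sum>a\<in>A. \<mu> a * f a"
  have "\<exists>a\<in>A. \<mu> a \<noteq> 0 \<and> f a \<le> ?m"
  proof (rule ccontr)
    assume "\<not> ?thesis"
    then have above: "?m < f a" if "a \<in> A" "\<mu> a \<noteq> 0" for a
      using that by force
    have "sum \<mu> A \<noteq> 0" using assms(3) by simp
    then obtain a0 where "a0 \<in> A" "\<mu> a0 \<noteq> 0"
      using sum.not_neutral_contains_not_neutral by blast
    have "(\<Sum>a\<in>A. \<mu> a * ?m) < (\<Sum>a\<in>A. \<mu> a * f a)"
    proof (rule sum_strict_mono_ex1[OF assms(1)])
      show "\<forall>a\<in>A. \<mu> a * ?m \<le> \<mu> a * f a"
      proof
        fix a assume "a \<in> A"
        then show "\<mu> a * ?m \<le> \<mu> a * f a"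
          using above[of a] assms(2) by (cases "\<mu> a = 0") (auto intro!: mult_left_mono)
      qed
      have "0 < \<mu> a0" using \<open>a0 \<in> A\<close> \<open>\<mu> a0 \<noteq> 0\<close> assms(2) by (simp add: less_le)
      then show "\<exists>a\<in>A. \<mu> a * ?m < \<mu> a * f a"
        using \<open>a0 \<in> A\<close> \<open>\<mu> a0 \<noteq> 0\<close> above by (blast intro: mult_strict_left_mono)
    qed
    then show False using assms(3) by (simp add: sum_distrib_right[symmetric])
  qed
  with that show thesis by blast
qed

theorem lemma5:
  fixes \<B> :: "'n::finite set set" and x :: "real ^ 'n" and F :: "(real ^ 'n) set" and d :: nat
  assumes "matroid_bases \<B>"
    and "x \<in> base_polytope \<B>"
    and "F face_of base_polytope \<B>" and "x \<in> F"
    and "\<forall>G. G face_of base_polytope \<B> \<and> x \<in> G \<longrightarrow> aff_dim F \<le> aff_dim G"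
    and "aff_dim F = int d"
  shows "\<exists>B\<in>\<B>. chi B \<in> F \<and> l1_norm (chi B - x) \<le> real d"
proof -
  obtain \<mu> where \<mu>: "\<forall>B\<in>\<B>. 0 \<le> \<mu> B" "sum \<mu> \<B> = 1" "x = (\<Sum>B\<in>\<B>. \<mu> B *\<^sub>R chi B)"
    using base_polytope_convex_combination[OF assms(2)] by blast
  have "card {i. x $ i \<noteq> 0 \<and> x $ i \<noteq> 1} \<le> 2 * d"
    using card_fractional_coords_le_aff_dim[OF assms(1,3,4) \<mu>] assms(6) by simp
  then have "real (card {i. x $ i \<noteq> 0 \<and> x $ i \<noteq> 1}) / 2 \<le> real d"
    by simp
  then have mean_le: "(\<Sum>B\<in>\<B>. \<mu> B * l1_norm (chi B - x)) \<le> real d"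
    unfolding mean_l1_distance_chi[OF \<mu>] by (rule order_trans[OF sum_two_mul_one_minus_le])
  obtain B where B: "B \<in> \<B>" "\<mu> B \<noteq> 0"
    and "l1_norm (chi B - x) \<le> (\<Sum>B\<in>\<B>. \<mu> B * l1_norm (chi B - x))"
    using exists_le_weighted_mean[OF finite \<mu>(1,2), of "\<lambda>B. l1_norm (chi B - x)"] by blast
  moreover have "chi B \<in> F"
    using face_of_convex_hull_support[of \<B> F chi \<mu>] assms(3,4) \<mu> B
    unfolding base_polytope_def by simp
  ultimately show ?thesis using mean_le B(1) by force
qed

end
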